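(* Fix $n>K\ge1$ and a nonrandom $n\times K$ design matrix $\mathbf{X}$ with rows $\mathbf{x}_i$ satisfying $\mathbf{X}^t\mathbf{X}=n\mathbf{I}$. Suppose $Y_i=\mathbf{x}_i^t\boldsymbol{\beta}_0+\varepsilon_i$, $i=1,\dots,n$, where $\varepsilon_i$ are i.i.d. $N(0,\sigma_0^2)$, $\sigma_0^2>0$, and $\boldsymbol{\beta}_0\in\mathbb{R}^K$ has $k_0$ nonzero coordinates with $1\le k_0<K$. Consider the rescaled spike and slab model with $\lambda_n=n$, with $\sigma^2\equiv1$ (i.e. $\mu\{\sigma^2=1\}=1$) and with $\boldsymbol{\beta}\sim N(\mathbf{0},\boldsymbol{\Gamma}_0)$, $\boldsymbol{\Gamma}_0=\mathrm{diag}(\gamma_{1,0},\dots,\gamma_{K,0})$, for a fixed hypervariance vector $\boldsymbol{\gamma}_0$ with positive entries. Then for each $0<\delta<1/2$ there exists such a $\boldsymbol{\gamma}_0$ for which $\mathcal{R}_Z(\alpha)<\mathcal{R}_O(\alpha)$ for all $\alpha\in[\delta,1-\delta]$.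
   Context: Let $\mathbf{Y}=(Y_1,\dots,Y_n)^t$, $\widehat{\boldsymbol{\beta}}_n^\circ=(\mathbf{X}^t\mathbf{X})^{-1}\mathbf{X}^t\mathbf{Y}=(\widehat\beta_{1,n}^\circ,\dots,\widehat\beta_{K,n}^\circ)^t$ (OLS) and $\widehat\sigma_n^2=\|\mathbf{Y}-\mathbf{X}\widehat{\boldsymbol{\beta}}_n^\circ\|^2/(n-K)$. Rescaled spike and slab model: $Y_i^*=\widehat\sigma_n^{-1}n^{1/2}Y_i$, and as data $\mathbf{Y}^*$ is modeled by $(Y_i^*\mid\boldsymbol{\beta},\sigma^2)$ independent $N(\mathbf{x}_i^t\boldsymbol{\beta},\sigma^2\lambda_n)$, with the stated priors on $\boldsymbol{\beta}$ and $\sigma^2$; $\widehat{\boldsymbol{\beta}}_n^*=(\widehat\beta_{1,n}^*,\dots,\widehat\beta_{K,n}^* )^t$ is the posterior mean of $\boldsymbol{\beta}$ given $\mathbf{Y}^*$. Let $s_{kk}$ be the $k$th diagonal entry of $(\mathbf{X}^t\mathbf{X}/n)^{-1}$ and $\widehat Z_{k,n}=n^{1/2}\widehat\beta_{k,n}^\circ/(\widehat\sigma_n s_{kk}^{1/2})$. Let $z_{\alpha/2}$ be the $100(1-\alpha/2)$ percentile of the standard normal distribution, and $\mathcal{B}_0=\{k:\beta_{k,0}=0\}$. Define $\mathcal{R}_Z(\alpha)=\sum_{k\in\mathcal{B}_0}\mathbb{P}\{|\widehat\beta_{k,n}^*|\ge z_{\alpha/2}\}+\sum_{k\notin\mathcal{B}_0}\mathbb{P}\{|\widehat\beta_{k,n}^*|<z_{\alpha/2}\}$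 and $\mathcal{R}_O(\alpha)=\sum_{k\in\mathcal{B}_0}\mathbb{P}\{|\widehat Z_{k,n}|\ge z_{\alpha/2}\}+\sum_{k\notin\mathcal{B}_0}\mathbb{P}\{|\widehat Z_{k,n}|<z_{\alpha/2}\}$, probabilities taken under the true model. *)

theory Defs
  imports "HOL-Probability.Probability"
begin

definition z_crit :: "real \<Rightarrow> real" where
  "z_crit a = (THE z. cdf std_normal_distribution z = 1 - a / 2)"

definition noise_measure :: "real \<Rightarrow> (real^'n::finite) measure" where
  "noise_measure s0 = density lborel (\<lambda>e. \<Prod>i\<in>UNIV. normal_density 0 s0 (e $ i))"

definition obs :: "real^'k^'n \<Rightarrow> real^'k \<Rightarrow> real^'n \<Rightarrow> real^'n"
  where "obs X b0 e = X *v b0 + e"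

definition ols :: "real^'k^'n \<Rightarrow> real^'n \<Rightarrow> real^'k::finite" where
  "ols X Y = matrix_inv (transpose X ** X) *v (transpose X *v Y)"

definition sigma_hat :: "real^'k::finite^'n::finite \<Rightarrow> real^'n \<Rightarrow> real" where
  "sigma_hat X Y = sqrt ((norm (Y - X *v ols X Y))^2 / (real CARD('n) - real CARD('k)))"

definition rescaled :: "real^'k::finite^'n::finite \<Rightarrow> real^'n \<Rightarrow> real^'n" where
  "rescaled X Y = (sqrt (real CARD('n)) / sigma_hat X Y) *\<^sub>R Y"

text \<open>Likelihood of data y under the model y_i ~ N(x_i^t b, sigma^2 lambda_n) with
  sigma^2 = 1 and lambda_n = n.\<close>
definition lik :: "real^'k::finite^'n::finite \<Rightarrow> real^'n \<Rightarrow> real^'k \<Rightarrow> real" where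
  "lik X y b = (\<Prod>i\<in>UNIV. normal_density ((X *v b) $ i) (sqrt (real CARD('n))) (y $ i))"

definition prior_dens :: "real^'k::finite \<Rightarrow> real^'k \<Rightarrow> real" where
  "prior_dens g b = (\<Prod>k\<in>UNIV. normal_density 0 (sqrt (g $ k)) (b $ k))"

definition post_mean :: "real^'k::finite^'n::finite \<Rightarrow> real^'k \<Rightarrow> real^'n \<Rightarrow> 'k \<Rightarrow> real" where
  "post_mean X g y k =
     (\<integral>b. b $ k * lik X y b * prior_dens g b \<partial>lborel) / (\<integral>b. lik X y b * prior_dens g b \<partial>lborel)"

definition beta_star :: "real^'k::finite^'n::finite \<Rightarrow> real^'k \<Rightarrow> real^'k \<Rightarrow> real^'n \<Rightarrow> 'k \<Rightarrow> real" where
  "beta_star X b0 g e k = post_mean X g (rescaled X (obs X b0 e)) k"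

definition z_stat :: "real^'k::finite^'n::finite \<Rightarrow> real^'k \<Rightarrow> real^'n \<Rightarrow> 'k \<Rightarrow> real" where
  "z_stat X b0 e k =
     (let Y = obs X b0 e;
          s = matrix_inv ((1 / real CARD('n)) *\<^sub>R (transpose X ** X)) $ k $ k
      in sqrt (real CARD('n)) * ols X Y $ k / (sigma_hat X Y * sqrt s))"

definition risk_Z :: "real^'k::finite^'n::finite \<Rightarrow> real^'k \<Rightarrow> real \<Rightarrow> real^'k \<Rightarrow> real \<Rightarrow> real" where
  "risk_Z X b0 s0 g a =
     (\<Sum>k\<in>{k. b0 $ k = 0}. measure (noise_measure s0) {e. \<bar>beta_star X b0 g e k\<bar> \<ge> z_crit a})
   + (\<Sum>k\<in>{k. b0 $ k \<noteq> 0}. measure (noise_measure s0) {e. \<bar>beta_star X b0 g e k\<bar> < z_crit a})"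

definition risk_O :: "real^'k::finite^'n::finite \<Rightarrow> real^'k \<Rightarrow> real \<Rightarrow> real \<Rightarrow> real" where
  "risk_O X b0 s0 a =
     (\<Sum>k\<in>{k. b0 $ k = 0}. measure (noise_measure s0) {e. \<bar>z_stat X b0 e k\<bar> \<ge> z_crit a})
   + (\<Sum>k\<in>{k. b0 $ k \<noteq> 0}. measure (noise_measure s0) {e. \<bar>z_stat X b0 e k\<bar> < z_crit a})"

end

theory Submission
  imports Defs
begin

text \<open>Since \<open>X\<^sup>t X = n I\<close>, prior and likelihood factor over the coordinates and the posterior mean
  of \<open>\<beta>\<^sub>k\<close> is the least squares estimate shrunk by \<open>\<gamma>\<^sub>k / (1 + \<gamma>\<^sub>k)\<close>; after the rescaling of the data
  it is exactly \<open>\<gamma>\<^sub>k / (1 + \<gamma>\<^sub>k)\<close> times the \<open>Z\<close> statistic. So the spike and slab rule compares \<open>|Z\<^sub>k|\<close>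
  with the larger threshold \<open>z (1 + \<gamma>\<^sub>k) / \<gamma>\<^sub>k\<close>. Moving the noise along the \<open>k\<close>-th column of \<open>X\<close>
  shifts the \<open>k\<close>-th least squares coefficient without changing the residuals; hence \<open>|Z\<^sub>k|\<close> has no
  atoms away from \<open>0\<close> and puts mass beyond every threshold. Strong shrinkage of one null coordinate
  therefore removes a fixed amount of false positive probability, while mild shrinkage of the
  other coordinates changes their error probabilities arbitrarily little, uniformly over the
  compact range of thresholds \<open>z = z\<^sub>\<alpha>\<^sub>/\<^sub>2\<close>, \<open>\<alpha> \<in> [\<delta>, 1 - \<delta>]\<close>.\<close>

declare transpose_matrix_vector [simp del] \<comment> \<open>keep \<open>transpose X *v Y\<close> instead of \<open>Y v* X\<close>\<close>

section \<open>Product integrals on \<open>real^'n\<close>\<close>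

lemma prod_vec_nth_eq_prod_Basis:
  fixes g :: "'n::finite \<Rightarrow> real \<Rightarrow> 'b::comm_monoid_mult"
  shows "(\<Prod>i\<in>UNIV. g i (x $ i)) = (\<Prod>b\<in>Basis. g (axis_index b) (x \<bullet> b))"
proof -
  have Basis: "(Basis :: (real^'n) set) = (\<lambda>i. axis i 1) ` UNIV"
    by (auto simp: Basis_vec_def)
  have "inj (\<lambda>i::'n. axis i (1::real))"
    by (auto simp: inj_def axis_eq_axis)
  then show ?thesis
    unfolding Basis by (subst prod.reindex) (simp_all add: inner_axis)
qed

lemma has_bochner_integral_lborel_vec_prod:
  fixes g :: "'n::finite \<Rightarrow> real \<Rightarrow> real"
  assumes integrable: "\<And>i. integrable lborel (g i)"
  shows "has_bochner_integral lborel (\<lambda>x::real^'n. \<Prod>i\<in>UNIV. g i (x $ i))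
           (\<Prod>i\<in>UNIV. \<integral>t. g i t \<partial>lborel)"
proof -
  interpret product_sigma_finite "\<lambda>_::real^'n. lborel :: real measure"
    by (simp add: product_sigma_finite_def lborel.sigma_finite_measure_axioms)
  define T where "T f = (\<Sum>b\<in>(Basis :: (real^'n) set). f b *\<^sub>R b)" for f
  have T_inner: "T f \<bullet> b = f b" if "b \<in> Basis" for f b
    using that by (simp add: T_def inner_sum_left inner_Basis if_distrib cong: if_cong)
  have [measurable]: "g i \<in> borel_measurable borel" for i
    using integrable[of i] by auto
  have "has_bochner_integral (\<Pi>\<^sub>M b\<in>(Basis :: (real^'n) set). lborel)
          (\<lambda>f. \<Prod>b\<in>Basis. g (axis_index b) (f b))
          (\<Prod>b\<in>(Basis :: (real^'n) set). \<integral>t. g (axis_index b) t \<partial>lborel)"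
    using product_integrable_prod[of Basis "\<lambda>b. g (axis_index b)"]
      product_integral_prod[of Basis "\<lambda>b. g (axis_index b)"] integrable
    by (simp add: has_bochner_integral_iff)
  moreover have "(\<Prod>i\<in>UNIV. g i (T f $ i)) = (\<Prod>b\<in>Basis. g (axis_index b) (f b))" for f
    unfolding prod_vec_nth_eq_prod_Basis by (intro prod.cong) (simp_all add: T_inner)
  moreover have "(\<Prod>i\<in>UNIV. \<integral>t. g i t \<partial>lborel) = (\<Prod>b\<in>(Basis :: (real^'n) set). \<integral>t. g (axis_index b) t \<partial>lborel)"
    using prod_vec_nth_eq_prod_Basis[of "\<lambda>i _. \<integral>t. g i t \<partial>lborel" 0] by simp
  ultimately have "has_bochner_integral (\<Pi>\<^sub>M b\<in>Basis. lborel) (\<lambda>f. \<Prod>i\<in>UNIV. g i (T f $ i))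
               (\<Prod>i\<in>UNIV. \<integral>t. g i t \<partial>lborel)"
    by simp
  then have "has_bochner_integral (distr (\<Pi>\<^sub>M b\<in>Basis. lborel) borel T) (\<lambda>x. \<Prod>i\<in>UNIV. g i (x $ i))
               (\<Prod>i\<in>UNIV. \<integral>t. g i t \<partial>lborel)"
    by (intro has_bochner_integral_distr) (auto simp: T_def[abs_def])
  then show ?thesis
    unfolding T_def[abs_def] lborel_eq[symmetric] .
qed

lemma matrix_inv_eqI:
  fixes A B :: "'a::semiring_1^'n^'n"
  assumes "A ** B = mat 1" and "B ** A = mat 1"
  shows "matrix_inv A = B"
  unfolding matrix_inv_def
proof (rule some_equality)
  fix B' assume B': "A ** B' = mat 1 \<and> B' ** A = mat 1"
  have "B' = B' ** (A ** B)"
    using assms by simp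
  also have "\<dots> = (B' ** A) ** B"
    by (simp add: matrix_mul_assoc)
  finally show "B' = B"
    using B' by simp
qed (use assms in simp)

lemma matrix_inv_mult_left:
  fixes A :: "'a::semiring_1^'n^'n"
  assumes "invertible A"
  shows "matrix_inv A ** A = mat 1"
  using someI_ex[OF assms[unfolded invertible_def]] unfolding matrix_inv_def by blast

lemma mat_eq_scaleR_mat_1: "(mat c :: real^'n::finite^'n) = c *\<^sub>R mat 1"
  by (simp add: vec_eq_iff mat_def)

lemma mat_mult_mat: "mat c ** (mat d :: real^'n::finite^'n) = mat (c * d)"
  by (metis mat_eq_scaleR_mat_1 matrix_mul_lid scalar_matrix_assoc scaleR_scaleR)

lemma mat_matrix_vector_mult: "mat c *v (x :: real^'n::finite) = c *\<^sub>R x"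
  by (metis mat_eq_scaleR_mat_1 matrix_vector_mul_lid scaleR_matrix_vector_assoc)

lemma matrix_inv_mat:
  assumes "c \<noteq> 0"
  shows "matrix_inv (mat c :: real^'n::finite^'n) = mat (1 / c)"
  using assms by (intro matrix_inv_eqI) (simp_all add: mat_mult_mat)

lemma invertible_mat: "c \<noteq> 0 \<Longrightarrow> invertible (mat c :: real^'n::finite^'n)"
  unfolding invertible_def by (intro exI[of _ "mat (1 / c)"]) (simp add: mat_mult_mat)

section \<open>Least squares\<close>

lemma ols_orthogonal_design:
  fixes X :: "real^'k::finite^'n::finite"
  assumes "transpose X ** X = mat (real CARD('n))"
  shows "ols X Y = (1 / real CARD('n)) *\<^sub>R (transpose X *v Y)"
  unfolding ols_def assms by (simp add: matrix_inv_mat mat_matrix_vector_mult)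

lemma ols_scaleR: "ols X (c *\<^sub>R Y) = c *\<^sub>R ols X Y"
  by (simp add: ols_def matrix_vector_mult_scaleR)

lemma ols_add_fitted:
  fixes X :: "real^'k::finite^'n::finite"
  assumes "invertible (transpose X ** X)"
  shows "ols X (Y + X *v b) = ols X Y + b"
proof -
  have "ols X (Y + X *v b) = ols X Y + (matrix_inv (transpose X ** X) ** (transpose X ** X)) *v b"
    by (simp add: ols_def matrix_vector_right_distrib matrix_vector_mul_assoc)
  then show ?thesis
    by (simp add: matrix_inv_mult_left[OF assms])
qed

lemma sigma_hat_add_fitted:
  fixes X :: "real^'k::finite^'n::finite"
  assumes "invertible (transpose X ** X)"
  shows "sigma_hat X (Y + X *v b) = sigma_hat X Y"
  by (simp add: sigma_hat_def ols_add_fitted[OF assms] matrix_vector_right_distrib)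

lemma continuous_on_ols [continuous_intros]:
  "continuous_on S f \<Longrightarrow> continuous_on S (\<lambda>x. ols X (f x))"
  unfolding ols_def matrix_vector_mul_assoc
  by (rule bounded_linear.continuous_on[OF matrix_vector_mul_bounded_linear])

lemma continuous_on_matrix_vector_mult [continuous_intros]:
  "continuous_on S f \<Longrightarrow> continuous_on S (\<lambda>x. (A :: real^'n::finite^'m::finite) *v f x)"
  by (rule bounded_linear.continuous_on[OF matrix_vector_mul_bounded_linear])

lemma continuous_on_sigma_hat [continuous_intros]:
  "continuous_on S f \<Longrightarrow> continuous_on S (\<lambda>x. sigma_hat X (f x))"
  unfolding sigma_hat_def divide_inverse by (intro continuous_intros)

lemma ex_sigma_hat_pos:
  fixes X :: "real^'k::finite^'n::finite"
  assumes "CARD('k) < CARD('n)"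
  shows "\<exists>Y. 0 < sigma_hat X Y"
proof -
  have "dim (range ((*v) X)) \<le> dim (UNIV :: (real^'k) set)"
    by (rule dim_image_le[OF matrix_vector_mul_linear])
  then have "range ((*v) X) \<noteq> UNIV"
    using assms by (auto simp: dim_UNIV)
  then obtain Y where "Y \<notin> range ((*v) X)"
    by blast
  then have "Y - X *v ols X Y \<noteq> 0"
    by (metis eq_iff_diff_eq_0 rangeI)
  then have "0 < sigma_hat X Y"
    using assms by (simp add: sigma_hat_def)
  then show ?thesis ..
qed

lemma z_stat_orthogonal_design:
  fixes X :: "real^'k::finite^'n::finite"
  assumes "transpose X ** X = mat (real CARD('n))"
  shows "z_stat X b0 e k = sqrt (real CARD('n)) * ols X (obs X b0 e) $ k / sigma_hat X (obs X b0 e)"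
proof -
  have "(1 / real CARD('n)) *\<^sub>R (transpose X ** X) = mat 1"
    using assms by (simp add: vec_eq_iff mat_def)
  then have "matrix_inv ((1 / real CARD('n)) *\<^sub>R (transpose X ** X)) = mat 1"
    using matrix_inv_mat[of 1] by simp
  then show ?thesis
    unfolding z_stat_def Let_def by (simp add: mat_def)
qed

lemma ols_sigma_hat_column_shift:
  fixes X :: "real^'k::finite^'n::finite"
  assumes "invertible (transpose X ** X)"
  shows "ols X (obs X b0 (e + r *\<^sub>R (X *v axis k 1))) $ k = ols X (obs X b0 e) $ k + r"
    and "sigma_hat X (obs X b0 (e + r *\<^sub>R (X *v axis k 1))) = sigma_hat X (obs X b0 e)"
proof -
  have obs: "obs X b0 (e + r *\<^sub>R (X *v axis k 1)) = obs X b0 e + X *v (r *\<^sub>R axis k 1)"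
    by (simp add: obs_def matrix_vector_mult_scaleR add_ac)
  show "ols X (obs X b0 (e + r *\<^sub>R (X *v axis k 1))) $ k = ols X (obs X b0 e) $ k + r"
    unfolding obs ols_add_fitted[OF assms] by (simp add: axis_def)
  show "sigma_hat X (obs X b0 (e + r *\<^sub>R (X *v axis k 1))) = sigma_hat X (obs X b0 e)"
    unfolding obs sigma_hat_add_fitted[OF assms] ..
qed

section \<open>The posterior mean\<close>

lemma prod_normal_density_eq_exp:
  fixes \<mu> \<sigma> x :: "'i::finite \<Rightarrow> real"
  shows "(\<Prod>i\<in>UNIV. normal_density (\<mu> i) (\<sigma> i) (x i)) =
           (\<Prod>i\<in>UNIV. 1 / sqrt (2 * pi * (\<sigma> i)\<^sup>2)) * exp (\<Sum>i\<in>UNIV. - (x i - \<mu> i)\<^sup>2 / (2 * (\<sigma> i)\<^sup>2))"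
proof -
  have "exp (\<Sum>i\<in>UNIV. - (x i - \<mu> i)\<^sup>2 / (2 * (\<sigma> i)\<^sup>2))
        = (\<Prod>i\<in>UNIV. exp (- (x i - \<mu> i)\<^sup>2 / (2 * (\<sigma> i)\<^sup>2)))"
    by (simp add: exp_sum)
  then show ?thesis
    by (simp add: normal_density_def prod.distrib[symmetric])
qed

lemma sum_sq_residual_orthogonal_design:
  fixes X :: "real^'k::finite^'n::finite"
  assumes "transpose X ** X = mat (real CARD('n))"
  shows "(\<Sum>i\<in>UNIV. (y $ i - (X *v b) $ i)\<^sup>2) =
           y \<bullet> y + (\<Sum>j\<in>UNIV. real CARD('n) * (b $ j)\<^sup>2 - 2 * (transpose X *v y) $ j * b $ j)"
proof -
  have "(\<Sum>i\<in>UNIV. (y $ i - (X *v b) $ i)\<^sup>2) = (y - X *v b) \<bullet> (y - X *v b)"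
    by (simp add: inner_vec_def power2_eq_square)
  also have "\<dots> = y \<bullet> y - 2 * (y \<bullet> (X *v b)) + (X *v b) \<bullet> (X *v b)"
    by (simp add: inner_diff_left inner_diff_right inner_commute)
  also have "y \<bullet> (X *v b) = (transpose X *v y) \<bullet> b"
    by (metis dot_lmul_matrix inner_commute vector_transpose_matrix)
  also have "(X *v b) \<bullet> (X *v b) = b \<bullet> (transpose X *v (X *v b))"
    by (metis dot_lmul_matrix inner_commute vector_transpose_matrix)
  also have "transpose X *v (X *v b) = real CARD('n) *\<^sub>R b"
    by (simp add: matrix_vector_mul_assoc assms mat_matrix_vector_mult)
  finally show ?thesis
    by (simp add: inner_vec_def sum_subtractf sum_distrib_left power2_eq_square algebra_simps)
qed

lemma complete_square_shrinkage:
  fixes g N v b :: real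
  assumes "0 < g" and "0 < N"
  defines "w \<equiv> g / (1 + g)"
  shows "- b\<^sup>2 / 2 + v * b / N - b\<^sup>2 / (2 * g) = - (b - w * v / N)\<^sup>2 / (2 * w) + w * (v / N)\<^sup>2 / 2"
proof -
  have "0 < w" and "1 / w = 1 + 1 / g"
    using assms by (simp_all add: w_def field_simps)
  then have "- (b - w * v / N)\<^sup>2 / (2 * w) + w * (v / N)\<^sup>2 / 2 = v * b / N - b\<^sup>2 * (1 / w) / 2"
    using \<open>0 < N\<close> by (simp add: field_simps power2_eq_square)
  also have "\<dots> = - b\<^sup>2 / 2 + v * b / N - b\<^sup>2 / (2 * g)"
    using \<open>0 < g\<close> by (simp add: \<open>1 / w = 1 + 1 / g\<close> field_simps)
  finally show ?thesis ..
qed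

lemma log_lik_prior_orthogonal_design:
  fixes X :: "real^'k::finite^'n::finite"
  assumes XtX: "transpose X ** X = mat (real CARD('n))" and g: "\<And>j. 0 < g $ j"
  defines "w j \<equiv> g $ j / (1 + g $ j)"
  shows "(\<Sum>i\<in>UNIV. - (y $ i - (X *v b) $ i)\<^sup>2 / (2 * real CARD('n))) + (\<Sum>j\<in>UNIV. - (b $ j)\<^sup>2 / (2 * g $ j))
         = (\<Sum>j\<in>UNIV. - (b $ j - w j * ols X y $ j)\<^sup>2 / (2 * w j))
           - y \<bullet> y / (2 * real CARD('n)) + (\<Sum>j\<in>UNIV. w j * (ols X y $ j)\<^sup>2 / 2)"
proof -
  define N where "N = real CARD('n)"
  define v where "v = transpose X *v y"
  have "0 < N"
    by (simp add: N_def)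
  have ols: "ols X y $ j = v $ j / N" for j
    by (simp add: v_def N_def ols_orthogonal_design[OF XtX])
  have "(\<Sum>i\<in>UNIV. - (y $ i - (X *v b) $ i)\<^sup>2 / (2 * N))
        = - (y \<bullet> y) / (2 * N) + (\<Sum>j\<in>UNIV. - (N * (b $ j)\<^sup>2 - 2 * v $ j * b $ j) / (2 * N))"
    by (simp add: sum_sq_residual_orthogonal_design[OF XtX] v_def N_def sum_divide_distrib[symmetric]
        sum_negf sum_subtractf diff_divide_distrib add_divide_distrib;
        simp add: field_simps sum_distrib_left)
  also have "\<dots> = - (y \<bullet> y) / (2 * N) + (\<Sum>j\<in>UNIV. - (b $ j)\<^sup>2 / 2 + v $ j * b $ j / N)"
    using \<open>0 < N\<close> by (simp add: field_simps)
  finally have "(\<Sum>i\<in>UNIV. - (y $ i - (X *v b) $ i)\<^sup>2 / (2 * N)) + (\<Sum>j\<in>UNIV. - (b $ j)\<^sup>2 / (2 * g $ j))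
      = - (y \<bullet> y) / (2 * N) + (\<Sum>j\<in>UNIV. - (b $ j)\<^sup>2 / 2 + v $ j * b $ j / N - (b $ j)\<^sup>2 / (2 * g $ j))"
    by (simp add: sum.distrib sum_subtractf sum_negf)
  also have "\<dots> = - (y \<bullet> y) / (2 * N)
      + (\<Sum>j\<in>UNIV. - (b $ j - w j * (v $ j / N))\<^sup>2 / (2 * w j) + w j * (v $ j / N)\<^sup>2 / 2)"
    using complete_square_shrinkage[OF g \<open>0 < N\<close>] by (simp add: w_def)
  finally show ?thesis
    by (simp add: ols N_def sum_subtractf sum_negf)
qed

lemma lik_prior_dens_factor:
  fixes X :: "real^'k::finite^'n::finite"
  assumes XtX: "transpose X ** X = mat (real CARD('n))" and g: "\<And>j. 0 < g $ j"
  defines "w j \<equiv> g $ j / (1 + g $ j)"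
  obtains D where "0 < D"
    and "\<And>b. lik X y b * prior_dens g b =
               D * (\<Prod>j\<in>UNIV. normal_density (w j * ols X y $ j) (sqrt (w j)) (b $ j))"
proof
  define N where "N = real CARD('n)"
  have "0 < N"
    by (simp add: N_def)
  have g': "0 \<le> g $ j" and w: "0 < w j" for j
    using g[of j] by (simp_all add: w_def)
  define C1 where "C1 = (\<Prod>i\<in>(UNIV :: 'n set). 1 / sqrt (2 * pi * N))
                        * (\<Prod>j\<in>(UNIV :: 'k set). 1 / sqrt (2 * pi * g $ j))"
  define C2 where "C2 = (\<Prod>j\<in>(UNIV :: 'k set). 1 / sqrt (2 * pi * w j))"
  define R where "R = - y \<bullet> y / (2 * N) + (\<Sum>j\<in>UNIV. w j * (ols X y $ j)\<^sup>2 / 2)"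
  have "0 < C1"
    unfolding C1_def using g \<open>0 < N\<close> by (intro mult_pos_pos prod_pos) auto
  have "0 < C2"
    unfolding C2_def using w by (intro prod_pos) simp
  then show "0 < C1 * exp R / C2"
    using \<open>0 < C1\<close> by simp
  fix b :: "real^'k"
  have "lik X y b * prior_dens g b
        = C1 * exp ((\<Sum>i\<in>UNIV. - (y $ i - (X *v b) $ i)\<^sup>2 / (2 * N)) + (\<Sum>j\<in>UNIV. - (b $ j)\<^sup>2 / (2 * g $ j)))"
    unfolding lik_def prior_dens_def
      prod_normal_density_eq_exp[of "\<lambda>i. (X *v b) $ i"] prod_normal_density_eq_exp[of "\<lambda>_. 0"]
    by (simp add: C1_def N_def g' exp_add)
  also have "(\<Sum>i\<in>UNIV. - (y $ i - (X *v b) $ i)\<^sup>2 / (2 * N)) + (\<Sum>j\<in>UNIV. - (b $ j)\<^sup>2 / (2 * g $ j))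
             = (\<Sum>j\<in>UNIV. - (b $ j - w j * ols X y $ j)\<^sup>2 / (2 * w j)) + R"
    unfolding N_def R_def w_def log_lik_prior_orthogonal_design[OF XtX g] by simp
  also have "C1 * exp ((\<Sum>j\<in>UNIV. - (b $ j - w j * ols X y $ j)\<^sup>2 / (2 * w j)) + R)
             = C1 * exp R / C2 * (C2 * exp (\<Sum>j\<in>UNIV. - (b $ j - w j * ols X y $ j)\<^sup>2 / (2 * w j)))"
    using \<open>0 < C2\<close> by (simp add: exp_add)
  also have "C2 * exp (\<Sum>j\<in>UNIV. - (b $ j - w j * ols X y $ j)\<^sup>2 / (2 * w j))
             = (\<Prod>j\<in>UNIV. normal_density (w j * ols X y $ j) (sqrt (w j)) (b $ j))"
    by (simp add: C2_def prod_normal_density_eq_exp w less_imp_le)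
  finally show "lik X y b * prior_dens g b =
      C1 * exp R / C2 * (\<Prod>j\<in>UNIV. normal_density (w j * ols X y $ j) (sqrt (w j)) (b $ j))" .
qed

lemma integral_prod_normal_density:
  fixes \<mu> \<sigma> :: "'k::finite \<Rightarrow> real"
  assumes \<sigma>: "\<And>j. 0 < \<sigma> j"
  shows "(\<integral>b. (\<Prod>j\<in>UNIV. normal_density (\<mu> j) (\<sigma> j) (b $ j)) \<partial>(lborel :: (real^'k) measure)) = 1"
    and "(\<integral>b. b $ k * (\<Prod>j\<in>UNIV. normal_density (\<mu> j) (\<sigma> j) (b $ j)) \<partial>(lborel :: (real^'k) measure))
           = \<mu> k"
proof -
  show "(\<integral>b. (\<Prod>j\<in>UNIV. normal_density (\<mu> j) (\<sigma> j) (b $ j)) \<partial>(lborel :: (real^'k) measure)) = 1"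
    using has_bochner_integral_lborel_vec_prod[of "\<lambda>j. normal_density (\<mu> j) (\<sigma> j)"] \<sigma>
    by (simp add: has_bochner_integral_iff)
  define \<psi> where "\<psi> j = (\<lambda>t. normal_density (\<mu> j) (\<sigma> j) t * (if j = k then t else 1))" for j
  have "integrable lborel (\<psi> j)" for j
    using \<sigma>[of j] by (cases "j = k") (simp_all add: \<psi>_def integrable_normal_moment_nz_1)
  moreover have "(\<Prod>j\<in>UNIV. \<integral>t. \<psi> j t \<partial>lborel) = \<mu> k"
  proof -
    have "(\<integral>t. \<psi> j t \<partial>lborel) = (if j = k then \<mu> k else 1)" for j
      using \<sigma>[of j] by (cases "j = k") (simp_all add: \<psi>_def integral_normal_moment_nz_1)
    then show ?thesis
      by (simp add: prod.delta)
  qed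
  moreover have "b $ k * (\<Prod>j\<in>UNIV. normal_density (\<mu> j) (\<sigma> j) (b $ j)) = (\<Prod>j\<in>UNIV. \<psi> j (b $ j))" for b
    by (simp add: \<psi>_def prod.distrib prod.delta)
  ultimately show "(\<integral>b. b $ k * (\<Prod>j\<in>UNIV. normal_density (\<mu> j) (\<sigma> j) (b $ j)) \<partial>(lborel :: (real^'k) measure))
                     = \<mu> k"
    using has_bochner_integral_lborel_vec_prod[of \<psi>] by (simp add: has_bochner_integral_iff)
qed

lemma post_mean_orthogonal_design:
  fixes X :: "real^'k::finite^'n::finite"
  assumes XtX: "transpose X ** X = mat (real CARD('n))" and g: "\<And>j. 0 < g $ j"
  shows "post_mean X g y k = g $ k / (1 + g $ k) * ols X y $ k"
proof -
  define w where "w j = g $ j / (1 + g $ j)" for j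
  define \<phi> where "\<phi> b = (\<Prod>j\<in>UNIV. normal_density (w j * ols X y $ j) (sqrt (w j)) (b $ j))"
    for b :: "real^'k"
  obtain D where "0 < D" and factor: "\<And>b. lik X y b * prior_dens g b = D * \<phi> b"
    using lik_prior_dens_factor[OF XtX g] unfolding w_def \<phi>_def by blast
  have "0 < sqrt (w j)" for j
    using g[of j] by (simp add: w_def)
  then have "(\<integral>b. \<phi> b \<partial>lborel) = 1" and "(\<integral>b. b $ k * \<phi> b \<partial>lborel) = w k * ols X y $ k"
    unfolding \<phi>_def by (fact integral_prod_normal_density)+
  then show ?thesis
    using \<open>0 < D\<close> by (simp add: post_mean_def mult.assoc factor mult.left_commute[of _ D] w_def)
qed

lemma beta_star_orthogonal_design:
  fixes X :: "real^'k::finite^'n::finite"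
  assumes XtX: "transpose X ** X = mat (real CARD('n))" and g: "\<And>j. 0 < g $ j"
  shows "beta_star X b0 g e k = g $ k / (1 + g $ k) * z_stat X b0 e k"
  by (simp add: beta_star_def rescaled_def post_mean_orthogonal_design[OF XtX g] ols_scaleR
      z_stat_orthogonal_design[OF XtX])

lemma sets_noise_measure [simp, measurable_cong]:
  "sets (noise_measure s0 :: (real^'n::finite) measure) = sets borel"
  by (simp add: noise_measure_def)

lemma space_noise_measure [simp]: "space (noise_measure s0 :: (real^'n::finite) measure) = UNIV"
  by (simp add: noise_measure_def)

lemma prob_space_noise_measure:
  assumes "0 < s0"
  shows "prob_space (noise_measure s0 :: (real^'n::finite) measure)"
proof
  have "has_bochner_integral lborel (\<lambda>e::real^'n. \<Prod>i\<in>UNIV. normal_density 0 s0 (e $ i)) 1"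
    using has_bochner_integral_lborel_vec_prod[of "\<lambda>_. normal_density 0 s0"] assms by simp
  then have "(\<integral>\<^sup>+e. (\<Prod>i\<in>UNIV. normal_density 0 s0 (e $ i)) \<partial>(lborel :: (real^'n) measure)) = 1"
    by (subst nn_integral_eq_integral) (auto simp: has_bochner_integral_iff intro!: prod_nonneg)
  then show "emeasure (noise_measure s0 :: (real^'n) measure) (space (noise_measure s0)) = 1"
    by (simp add: noise_measure_def emeasure_density)
qed

lemma null_sets_density_iff_lborel:
  fixes f :: "'a::euclidean_space \<Rightarrow> real"
  assumes "f \<in> borel_measurable borel" and pos: "\<And>x. 0 < f x" and "A \<in> sets borel"
  shows "A \<in> null_sets (density lborel f) \<longleftrightarrow> A \<in> null_sets lborel"
proof -
  have "A \<in> null_sets (density lborel f) \<longleftrightarrow> A \<in> sets lborel \<and> (AE x in lborel. x \<in> A \<longrightarrow> ennreal (f x) = 0)"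
    using assms by (intro null_sets_density_iff) simp
  also have "\<dots> \<longleftrightarrow> A \<in> sets lborel \<and> (AE x in lborel. x \<notin> A)"
  proof -
    have "(x \<in> A \<longrightarrow> ennreal (f x) = 0) \<longleftrightarrow> x \<notin> A" for x
      using pos[of x] by simp
    then show ?thesis
      by simp
  qed
  also have "\<dots> \<longleftrightarrow> A \<in> null_sets lborel"
    using assms AE_iff_null_sets[of A lborel] by auto
  finally show ?thesis .
qed

lemma null_sets_noise_measure_iff:
  assumes "0 < s0" and "A \<in> sets borel"
  shows "A \<in> null_sets (noise_measure s0 :: (real^'n::finite) measure) \<longleftrightarrow> A \<in> null_sets lborel"
  unfolding noise_measure_def using assms
  by (intro null_sets_density_iff_lborel) (auto intro!: prod_pos normal_density_pos)

lemma open_not_null_sets_lborel: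
  fixes S :: "'a::euclidean_space set"
  assumes "open S" and "S \<noteq> {}"
  shows "S \<notin> null_sets lborel"
proof
  assume null: "S \<in> null_sets lborel"
  obtain x e where "0 < e" and "ball x e \<subseteq> S"
    using assms by (meson all_not_in_conv open_contains_ball)
  then have "ball x e \<in> null_sets lborel"
    by (intro null_sets_subset[OF null]) auto
  then have "measure lborel (ball x e) = 0"
    by (rule measure_eq_0_null_sets)
  with content_ball_pos[OF \<open>0 < e\<close>] show False
    by simp
qed

lemma measure_noise_measure_open_pos:
  assumes "0 < s0" and "open S" and "S \<noteq> {}"
  shows "0 < measure (noise_measure s0 :: (real^'n::finite) measure) S"
proof -
  interpret prob_space "noise_measure s0 :: (real^'n) measure"
    using assms(1) by (rule prob_space_noise_measure)
  have "S \<in> sets borel"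
    using assms(2) by simp
  moreover have "S \<notin> null_sets (noise_measure s0)"
    using assms by (simp add: null_sets_noise_measure_iff open_not_null_sets_lborel)
  ultimately have "emeasure (noise_measure s0) S \<noteq> 0"
    by (simp add: null_sets_def)
  then show ?thesis
    by (simp add: emeasure_eq_measure zero_less_measure_iff)
qed

text \<open>Under a finite measure equivalent to Lebesgue measure only countably many level sets of \<open>\<psi>\<close>
  carry mass; since the shift property makes all level sets translates of each other, all are null.\<close>

lemma null_sets_lborel_level_set:
  fixes \<psi> :: "real^'n::finite \<Rightarrow> real"
  assumes [measurable]: "\<psi> \<in> borel_measurable borel" and shift: "\<And>x r. \<psi> (x + r *\<^sub>R u) = \<psi> x + r"
  shows "{x. \<psi> x = c} \<in> null_sets lborel"
proof -
  define M where "M = (noise_measure 1 :: (real^'n) measure)"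
  interpret prob_space M
    unfolding M_def by (rule prob_space_noise_measure) simp
  have [simp, measurable_cong]: "sets M = sets borel"
    by (simp add: M_def)
  interpret distribution: finite_measure "distr M borel \<psi>"
    by (rule finite_measure_distr) (simp add: M_def)
  obtain a where "measure (distr M borel \<psi>) {a} = 0"
    using distribution.countable_support uncountable_UNIV_real
    by (metis (mono_tags, lifting) mem_Collect_eq subsetI countable_subset)
  then have "measure M {x. \<psi> x = a} = 0"
    by (subst (asm) measure_distr) (auto simp: M_def vimage_def)
  then have "{x. \<psi> x = a} \<in> null_sets M"
    by (simp add: emeasure_eq_measure null_sets_def)
  then have "{x. \<psi> x = a} \<in> null_sets lborel"
    using null_sets_noise_measure_iff[of 1 "{x. \<psi> x = a}"] by (simp add: M_def)
  moreover have "\<psi> (x - (c - a) *\<^sub>R u) = \<psi> x + (a - c)" for x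
    using shift[of x "a - c"] by (metis minus_diff_eq scaleR_minus_left diff_conv_add_uminus)
  then have "{x. \<psi> x = c} = {x. x - (c - a) *\<^sub>R u \<in> {x. \<psi> x = a}}"
    by auto
  ultimately show ?thesis
    using null_sets_translation by metis
qed

section \<open>The standard normal distribution\<close>

abbreviation \<Phi> :: "real \<Rightarrow> real" where
  "\<Phi> \<equiv> cdf std_normal_distribution"

lemma null_sets_std_normal_iff:
  "A \<in> sets borel \<Longrightarrow> A \<in> null_sets std_normal_distribution \<longleftrightarrow> A \<in> null_sets lborel"
  by (rule null_sets_density_iff_lborel) (auto intro: normal_density_pos)

lemma Phi_strict_mono:
  assumes "x < y"
  shows "\<Phi> x < \<Phi> y"
proof -
  interpret real_distribution std_normal_distribution
    by (rule real_dist_normal_dist)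
  have "{x<..y} \<notin> null_sets lborel"
    using assms by auto
  then have "{x<..y} \<notin> null_sets std_normal_distribution"
    using null_sets_std_normal_iff[of "{x<..y}"] by auto
  then have "emeasure std_normal_distribution {x<..y} \<noteq> 0"
    by (simp add: null_sets_def)
  then have "0 < measure std_normal_distribution {x<..y}"
    by (simp add: emeasure_eq_measure zero_less_measure_iff)
  then show ?thesis
    using cdf_diff_eq[OF assms] by simp
qed

lemma Phi_le_iff: "\<Phi> x \<le> \<Phi> y \<longleftrightarrow> x \<le> y"
  using Phi_strict_mono[of x y] Phi_strict_mono[of y x] by (cases x y rule: linorder_cases) auto

lemma isCont_Phi: "isCont \<Phi> x"
proof -
  interpret real_distribution std_normal_distribution
    by (rule real_dist_normal_dist)
  have "{x} \<in> null_sets std_normal_distribution"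
    using null_sets_std_normal_iff[of "{x}"] by auto
  then show ?thesis
    by (simp add: isCont_cdf measure_eq_0_null_sets)
qed

lemma Phi_zero: "\<Phi> 0 = 1 / 2"
proof -
  interpret real_distribution std_normal_distribution
    by (rule real_dist_normal_dist)
  have "emeasure std_normal_distribution {0<..}
        = (\<integral>\<^sup>+x. ennreal (std_normal_density x) * indicator {0<..} x \<partial>distr lborel borel uminus)"
    by (simp add: emeasure_density lborel_distr_uminus)
  also have "\<dots> = (\<integral>\<^sup>+x. ennreal (std_normal_density x) * indicator {..<0} x \<partial>lborel)"
    by (subst nn_integral_distr) (auto intro!: nn_integral_cong simp: normal_density_def indicator_def)
  also have "\<dots> = emeasure std_normal_distribution {..<0}"
    by (simp add: emeasure_density)
  finally have "measure std_normal_distribution {0<..} = measure std_normal_distribution {..<0}"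
    by (simp add: measure_def)
  moreover have "{0} \<in> null_sets std_normal_distribution"
    using null_sets_std_normal_iff[of "{0}"] by auto
  then have "measure std_normal_distribution {0} = 0"
    by (rule measure_eq_0_null_sets)
  moreover have "measure std_normal_distribution ({..<0} \<union> {0})
                 = measure std_normal_distribution {..<0} + measure std_normal_distribution {0}"
    by (rule finite_measure_Union) auto
  moreover have "measure std_normal_distribution ({..<0} \<union> {0} \<union> {0<..})
                 = measure std_normal_distribution ({..<0} \<union> {0}) + measure std_normal_distribution {0<..}"
    by (rule finite_measure_Union) auto
  moreover have "{..<0} \<union> {0} \<union> {0<..} = (UNIV :: real set)"
    by auto
  then have "measure std_normal_distribution ({..<0} \<union> {0} \<union> {0<..}) = 1"
    using prob_space by simp
  moreover have "{..<0} \<union> {0} = {..0::real}"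
    by auto
  ultimately show ?thesis
    by (simp add: cdf_def)
qed

lemma ex1_Phi_eq:
  assumes "0 < p" and "p < 1"
  shows "\<exists>!z. \<Phi> z = p"
proof -
  interpret real_distribution std_normal_distribution
    by (rule real_dist_normal_dist)
  obtain x1 where "p < \<Phi> x1"
    using order_tendstoD(1)[OF cdf_lim_at_top_prob assms(2)] by (auto simp: eventually_at_top_linorder)
  obtain x0 where "\<Phi> x0 < p"
    using order_tendstoD(2)[OF cdf_lim_at_bot assms(1)] by (auto simp: eventually_at_bot_linorder)
  have "x0 \<le> x1"
    using \<open>\<Phi> x0 < p\<close> \<open>p < \<Phi> x1\<close> Phi_le_iff[of x0 x1] by linarith
  then obtain z where "\<Phi> z = p"
    using IVT'[of \<Phi> x0 p x1] \<open>\<Phi> x0 < p\<close> \<open>p < \<Phi> x1\<close> isCont_Phi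
    by (auto intro: continuous_at_imp_continuous_on)
  moreover have "z' = z" if "\<Phi> z' = p" for z'
    using that \<open>\<Phi> z = p\<close> Phi_le_iff[of z z'] Phi_le_iff[of z' z] by auto
  ultimately show ?thesis
    by blast
qed

lemma Phi_z_crit:
  assumes "0 < a" and "a < 1"
  shows "\<Phi> (z_crit a) = 1 - a / 2"
  unfolding z_crit_def by (rule theI'[OF ex1_Phi_eq]) (use assms in auto)

lemma z_crit_antimono:
  assumes "0 < a" and "a \<le> b" and "b < 1"
  shows "z_crit b \<le> z_crit a"
proof -
  have "\<Phi> (z_crit b) \<le> \<Phi> (z_crit a)"
    using assms by (simp add: Phi_z_crit)
  then show ?thesis
    by (simp only: Phi_le_iff)
qed

lemma z_crit_pos:
  assumes "0 < a" and "a < 1"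
  shows "0 < z_crit a"
proof -
  have "\<Phi> 0 < \<Phi> (z_crit a)"
    using assms by (simp add: Phi_z_crit Phi_zero)
  then show ?thesis
    using Phi_le_iff[of "z_crit a" 0] by linarith
qed

section \<open>Distribution of the \<open>Z\<close> statistic\<close>

lemma continuous_on_obs [continuous_intros]:
  "continuous_on S f \<Longrightarrow> continuous_on S (\<lambda>x. obs X b0 (f x))"
  unfolding obs_def by (intro continuous_intros)

lemma borel_measurable_ols_obs [measurable]:
  "(\<lambda>e. ols X (obs X b0 e) $ k) \<in> borel_measurable borel"
  by (intro borel_measurable_continuous_onI continuous_intros)

lemma borel_measurable_sigma_hat_obs [measurable]:
  "(\<lambda>e. sigma_hat X (obs X b0 e)) \<in> borel_measurable borel"
  by (intro borel_measurable_continuous_onI continuous_intros)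

lemma borel_measurable_z_stat [measurable]: "(\<lambda>e. z_stat X b0 e k) \<in> borel_measurable borel"
  unfolding z_stat_def Let_def by measurable

lemma z_stat_no_atom:
  fixes X :: "real^'k::finite^'n::finite"
  assumes XtX: "transpose X ** X = mat (real CARD('n))" and "0 < s0" and "t \<noteq> 0"
  shows "measure (noise_measure s0) {e. z_stat X b0 e k = t} = 0"
proof -
  have inv: "invertible (transpose X ** X)"
    unfolding XtX by (simp add: invertible_mat)
  define \<psi> where "\<psi> = (\<lambda>e. ols X (obs X b0 e) $ k - t / sqrt (real CARD('n)) * sigma_hat X (obs X b0 e))"
  have "\<psi> (e + r *\<^sub>R (X *v axis k 1)) = \<psi> e + r" for e r
    by (simp add: \<psi>_def ols_sigma_hat_column_shift[OF inv])
  then have "{e. \<psi> e = 0} \<in> null_sets lborel"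
    by (intro null_sets_lborel_level_set) (simp_all add: \<psi>_def)
  moreover have "{e. \<psi> e = 0} \<in> sets borel"
    unfolding \<psi>_def by measurable
  ultimately have null: "{e. \<psi> e = 0} \<in> null_sets (noise_measure s0)"
    using null_sets_noise_measure_iff[OF \<open>0 < s0\<close>] by blast
  have "{e. z_stat X b0 e k = t} \<subseteq> {e. \<psi> e = 0}"
    using \<open>t \<noteq> 0\<close> by (auto simp: z_stat_orthogonal_design[OF XtX] \<psi>_def field_simps)
  then have "{e. z_stat X b0 e k = t} \<in> null_sets (noise_measure s0)"
    by (intro null_sets_subset[OF null]) simp_all
  then show ?thesis
    by (rule measure_eq_0_null_sets)
qed

lemma z_stat_exceeds_pos:
  fixes X :: "real^'k::finite^'n::finite"
  assumes XtX: "transpose X ** X = mat (real CARD('n))" and "CARD('k) < CARD('n)" and "0 < s0"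
  shows "0 < measure (noise_measure s0) {e. z < z_stat X b0 e k}"
proof -
  interpret prob_space "noise_measure s0 :: (real^'n) measure"
    using \<open>0 < s0\<close> by (rule prob_space_noise_measure)
  have inv: "invertible (transpose X ** X)"
    unfolding XtX by (simp add: invertible_mat)
  define N where "N = sqrt (real CARD('n))"
  define \<psi> where "\<psi> = (\<lambda>e. N * ols X (obs X b0 e) $ k - z * sigma_hat X (obs X b0 e))"
  define S where "S = {e. 0 < \<psi> e} \<inter> {e. 0 < sigma_hat X (obs X b0 e)}"
  have "0 < N"
    by (simp add: N_def)
  obtain Y where "0 < sigma_hat X Y"
    using ex_sigma_hat_pos[OF assms(2)] by blast
  define e0 where "e0 = Y - X *v b0"
  define e where "e = e0 + ((\<bar>\<psi> e0\<bar> + 1) / N) *\<^sub>R (X *v axis k 1)"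
  have "obs X b0 e0 = Y"
    by (simp add: e0_def obs_def)
  have "\<psi> e = \<psi> e0 + (\<bar>\<psi> e0\<bar> + 1)"
    using \<open>0 < N\<close> by (simp add: e_def \<psi>_def ols_sigma_hat_column_shift[OF inv] field_simps)
  moreover have "sigma_hat X (obs X b0 e) = sigma_hat X Y"
    by (simp add: e_def ols_sigma_hat_column_shift[OF inv] \<open>obs X b0 e0 = Y\<close>)
  ultimately have "e \<in> S"
    using \<open>0 < sigma_hat X Y\<close> by (simp add: S_def)
  moreover have "open S"
    unfolding S_def \<psi>_def by (intro open_Int open_Collect_less continuous_intros)
  ultimately have "0 < measure (noise_measure s0) S"
    using measure_noise_measure_open_pos[OF \<open>0 < s0\<close>] by blast
  also have "\<dots> \<le> measure (noise_measure s0) {e. z < z_stat X b0 e k}"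
  proof (rule finite_measure_mono)
    show "S \<subseteq> {e. z < z_stat X b0 e k}"
      by (auto simp: S_def \<psi>_def N_def z_stat_orthogonal_design[OF XtX] less_divide_eq)
  qed simp
  finally show ?thesis .
qed

lemma (in prob_space) cdf_distr_no_atom:
  assumes [measurable]: "V \<in> borel_measurable M" and atom: "prob {x \<in> space M. V x = t} = 0"
  shows "prob {x \<in> space M. V x < t} = cdf (distr M borel V) t"
    and "prob {x \<in> space M. t \<le> V x} = 1 - cdf (distr M borel V) t"
    and "isCont (cdf (distr M borel V)) t"
proof -
  interpret distribution: real_distribution "distr M borel V"
    by (rule real_distribution_distr) simp
  have "measure (distr M borel V) {t} = 0"
    using atom by (subst measure_distr) (auto simp: vimage_def Int_def conj_commute)
  then show "isCont (cdf (distr M borel V)) t"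
    by (simp add: distribution.isCont_cdf)
  have "cdf (distr M borel V) t = prob ({x \<in> space M. V x < t} \<union> {x \<in> space M. V x = t})"
    unfolding cdf_def by (subst measure_distr) (auto intro!: arg_cong[where f = prob])
  also have "\<dots> = prob {x \<in> space M. V x < t}"
    using atom by (subst finite_measure_Union) auto
  finally show lt: "prob {x \<in> space M. V x < t} = cdf (distr M borel V) t" ..
  have "prob {x \<in> space M. t \<le> V x} = prob (space M - {x \<in> space M. V x < t})"
    by (auto intro!: arg_cong[where f = prob])
  then show "prob {x \<in> space M. t \<le> V x} = 1 - cdf (distr M borel V) t"
    by (simp add: prob_compl lt)
qed

definition abs_z_stat_cdf :: "real^'k::finite^'n::finite \<Rightarrow> real^'k \<Rightarrow> real \<Rightarrow> 'k \<Rightarrow> real \<Rightarrow> real" where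
  "abs_z_stat_cdf X b0 s0 k = cdf (distr (noise_measure s0) borel (\<lambda>e. \<bar>z_stat X b0 e k\<bar>))"

lemma abs_z_stat_cdf_mono_tendsto:
  assumes "0 < s0"
  shows "mono (abs_z_stat_cdf X b0 s0 k)" and "(abs_z_stat_cdf X b0 s0 k \<longlongrightarrow> 1) at_top"
proof -
  interpret real_distribution "distr (noise_measure s0) borel (\<lambda>e. \<bar>z_stat X b0 e k\<bar>)"
    using assms by (intro prob_space.real_distribution_distr prob_space_noise_measure) simp_all
  show "mono (abs_z_stat_cdf X b0 s0 k)"
    unfolding abs_z_stat_cdf_def by (intro monoI cdf_nondecreasing)
  show "(abs_z_stat_cdf X b0 s0 k \<longlongrightarrow> 1) at_top"
    unfolding abs_z_stat_cdf_def by (rule cdf_lim_at_top_prob)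
qed

lemma abs_z_stat_cdf_no_atom:
  fixes X :: "real^'k::finite^'n::finite"
  assumes XtX: "transpose X ** X = mat (real CARD('n))" and "0 < s0" and "0 < t"
  shows "measure (noise_measure s0) {e. \<bar>z_stat X b0 e k\<bar> < t} = abs_z_stat_cdf X b0 s0 k t"
    and "measure (noise_measure s0) {e. t \<le> \<bar>z_stat X b0 e k\<bar>} = 1 - abs_z_stat_cdf X b0 s0 k t"
    and "isCont (abs_z_stat_cdf X b0 s0 k) t"
proof -
  interpret prob_space "noise_measure s0 :: (real^'n) measure"
    using \<open>0 < s0\<close> by (rule prob_space_noise_measure)
  have "prob {e. \<bar>z_stat X b0 e k\<bar> = t} \<le> prob ({e. z_stat X b0 e k = t} \<union> {e. z_stat X b0 e k = - t})"
    by (intro finite_measure_mono) auto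
  also have "\<dots> \<le> prob {e. z_stat X b0 e k = t} + prob {e. z_stat X b0 e k = - t}"
    by (intro measure_Un_le) auto
  also have "\<dots> = 0"
    using assms by (simp add: z_stat_no_atom)
  finally have "prob {e \<in> space (noise_measure s0). \<bar>z_stat X b0 e k\<bar> = t} = 0"
    using measure_nonneg[of "noise_measure s0" "{e. \<bar>z_stat X b0 e k\<bar> = t}"] by simp
  from cdf_distr_no_atom[OF _ this] show
      "measure (noise_measure s0) {e. \<bar>z_stat X b0 e k\<bar> < t} = abs_z_stat_cdf X b0 s0 k t"
      "measure (noise_measure s0) {e. t \<le> \<bar>z_stat X b0 e k\<bar>} = 1 - abs_z_stat_cdf X b0 s0 k t"
      "isCont (abs_z_stat_cdf X b0 s0 k) t"
    by (simp_all add: abs_z_stat_cdf_def)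
qed

lemma abs_z_stat_cdf_less_one:
  fixes X :: "real^'k::finite^'n::finite"
  assumes XtX: "transpose X ** X = mat (real CARD('n))" and "CARD('k) < CARD('n)" and "0 < s0"
    and "0 < t"
  shows "abs_z_stat_cdf X b0 s0 k t < 1"
proof -
  interpret prob_space "noise_measure s0 :: (real^'n) measure"
    using \<open>0 < s0\<close> by (rule prob_space_noise_measure)
  have "0 < prob {e. t < z_stat X b0 e k}"
    using assms(1-3) by (rule z_stat_exceeds_pos)
  also have "\<dots> \<le> prob {e. t \<le> \<bar>z_stat X b0 e k\<bar>}"
    by (intro finite_measure_mono) auto
  also have "\<dots> = 1 - abs_z_stat_cdf X b0 s0 k t"
    using assms by (simp add: abs_z_stat_cdf_no_atom)
  finally show ?thesis
    by simp
qed

lemma risk_O_eq_abs_z_stat_cdf: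
  fixes X :: "real^'k::finite^'n::finite"
  assumes XtX: "transpose X ** X = mat (real CARD('n))" and "0 < s0" and "0 < z_crit a"
  shows "risk_O X b0 s0 a = (\<Sum>k\<in>{k. b0 $ k = 0}. 1 - abs_z_stat_cdf X b0 s0 k (z_crit a))
                           + (\<Sum>k\<in>{k. b0 $ k \<noteq> 0}. abs_z_stat_cdf X b0 s0 k (z_crit a))"
  using assms by (simp add: risk_O_def abs_z_stat_cdf_no_atom)

lemma risk_Z_eq_abs_z_stat_cdf:
  fixes X :: "real^'k::finite^'n::finite"
  assumes XtX: "transpose X ** X = mat (real CARD('n))" and "0 < s0" and "0 < z_crit a"
    and g: "\<And>k. 0 < g $ k"
  defines "c k \<equiv> g $ k / (1 + g $ k)"
  shows "risk_Z X b0 s0 g a = (\<Sum>k\<in>{k. b0 $ k = 0}. 1 - abs_z_stat_cdf X b0 s0 k (z_crit a / c k))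
                             + (\<Sum>k\<in>{k. b0 $ k \<noteq> 0}. abs_z_stat_cdf X b0 s0 k (z_crit a / c k))"
proof -
  have c: "0 < c k" for k
    using g[of k] by (simp add: c_def)
  have "\<bar>beta_star X b0 g e k\<bar> = c k * \<bar>z_stat X b0 e k\<bar>" for e k
    using g[of k] by (simp add: beta_star_orthogonal_design[OF XtX g] c_def abs_mult)
  then have "{e. z_crit a \<le> \<bar>beta_star X b0 g e k\<bar>} = {e. z_crit a / c k \<le> \<bar>z_stat X b0 e k\<bar>}"
        and "{e. \<bar>beta_star X b0 g e k\<bar> < z_crit a} = {e. \<bar>z_stat X b0 e k\<bar> < z_crit a / c k}" for k
    using c[of k] by (auto simp: pos_divide_le_eq pos_less_divide_eq mult.commute)
  moreover have "0 < z_crit a / c k" for k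
    using \<open>0 < z_crit a\<close> c[of k] by simp
  ultimately show ?thesis
    by (simp add: risk_Z_def abs_z_stat_cdf_no_atom[OF XtX \<open>0 < s0\<close>])
qed

section \<open>Choosing the shrinkage\<close>

lemma exists_dilation_uniformly_close:
  fixes G :: "real \<Rightarrow> real"
  assumes "continuous_on {z1..2 * z2} G" and "0 < z1" and "z1 \<le> z2" and "0 < \<epsilon>"
  shows "\<exists>c. 0 < c \<and> c < 1 \<and> (\<forall>z\<in>{z1..z2}. \<bar>G (z / c) - G z\<bar> < \<epsilon>)"
proof -
  have "uniformly_continuous_on {z1..2 * z2} G"
    using assms(1) by (rule compact_uniformly_continuous) simp
  then obtain d where "0 < d" and d: "\<And>x y. x \<in> {z1..2 * z2} \<Longrightarrow> y \<in> {z1..2 * z2} \<Longrightarrow>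
                                        dist y x < d \<Longrightarrow> dist (G y) (G x) < \<epsilon>"
    using \<open>0 < \<epsilon>\<close> unfolding uniformly_continuous_on_def by metis
  define d' where "d' = min d z2"
  have "0 < d'" "d' \<le> d" "d' \<le> z2"
    using \<open>0 < d\<close> assms by (auto simp: d'_def)
  define c where "c = z2 / (z2 + d' / 2)"
  have "0 < c" "c < 1"
    using assms \<open>0 < d'\<close> by (auto simp: c_def field_simps)
  moreover have "\<bar>G (z / c) - G z\<bar> < \<epsilon>" if "z \<in> {z1..z2}" for z
  proof -
    have "z / c = z + z * d' / (2 * z2)"
      using assms \<open>0 < d'\<close> by (simp add: c_def field_simps)
    moreover have "z * d' / (2 * z2) \<le> d' / 2"
      using that assms \<open>0 < d'\<close> by (simp add: field_simps mult_right_mono)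
    moreover have "0 \<le> z * d' / (2 * z2)"
      using that assms \<open>0 < d'\<close> by simp
    ultimately have "z \<le> z / c" and "z / c \<le> z + d' / 2"
      by linarith+
    then show ?thesis
      using d[of z "z / c"] that \<open>d' \<le> d\<close> \<open>d' \<le> z2\<close> \<open>0 < d'\<close> by (simp add: dist_real_def)
  qed
  ultimately show ?thesis
    by blast
qed

lemma sum_tails_strict_decrease:
  fixes F :: "'k \<Rightarrow> real \<Rightarrow> real"
  assumes "finite K" and "k0 \<in> K" and mono: "\<And>k. mono (F k)" and "x \<le> y"
    and "\<epsilon> < F k0 y - F k0 x"
  shows "(\<Sum>k\<in>K. 1 - F k y) + \<epsilon> < (\<Sum>k\<in>K. 1 - F k x)"
proof -
  have "F k x \<le> F k y" for k
    using mono \<open>x \<le> y\<close> by (rule monoD)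
  then have "F k0 y - F k0 x \<le> (\<Sum>k\<in>K. F k y - F k x)"
    using assms by (intro member_le_sum) simp_all
  then show ?thesis
    using \<open>\<epsilon> < F k0 y - F k0 x\<close> by (simp add: sum_subtractf)
qed

lemma exists_dilation_lowering_tails:
  fixes F :: "'k \<Rightarrow> real \<Rightarrow> real"
  assumes "finite K" and "k0 \<in> K" and mono: "\<And>k. mono (F k)" and lim: "(F k0 \<longlongrightarrow> 1) at_top"
    and "0 < z1" and "z1 \<le> z2" and "F k0 z2 < 1"
  shows "\<exists>c. 0 < c \<and> c < 1 \<and>
           (\<forall>z\<in>{z1..z2}. (\<Sum>k\<in>K. 1 - F k (z / c)) + (1 - F k0 z2) / 2 < (\<Sum>k\<in>K. 1 - F k z))"
proof -
  have "eventually (\<lambda>x. 1 - (1 - F k0 z2) / 2 < F k0 x) at_top"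
    using \<open>F k0 z2 < 1\<close> by (intro order_tendstoD(1)[OF lim]) simp
  then obtain T0 where T0: "\<And>x. T0 \<le> x \<Longrightarrow> 1 - (1 - F k0 z2) / 2 < F k0 x"
    by (auto simp: eventually_at_top_linorder)
  define T where "T = max T0 (z2 + 1)"
  have "z2 < T" and T: "1 - (1 - F k0 z2) / 2 < F k0 T"
    using T0[of T] by (auto simp: T_def)
  define c where "c = z1 / T"
  have "0 < c" "c < 1"
    using assms \<open>z2 < T\<close> by (auto simp: c_def field_simps)
  moreover have "(\<Sum>k\<in>K. 1 - F k (z / c)) + (1 - F k0 z2) / 2 < (\<Sum>k\<in>K. 1 - F k z)"
    if "z \<in> {z1..z2}" for z
  proof (rule sum_tails_strict_decrease[OF assms(1,2) mono])
    show "z \<le> z / c"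
      using that assms \<open>0 < c\<close> \<open>c < 1\<close> by (simp add: le_divide_eq mult_left_le)
    have "T * z1 \<le> T * z"
      using that assms \<open>z2 < T\<close> by (intro mult_left_mono) auto
    then have "F k0 T \<le> F k0 (z / c)"
      using assms \<open>z2 < T\<close> by (intro monoD[OF mono]) (simp add: c_def field_simps)
    moreover have "F k0 z \<le> F k0 z2"
      using that by (intro monoD[OF mono]) simp
    ultimately show "(1 - F k0 z2) / 2 < F k0 (z / c) - F k0 z"
      using T by argo
  qed
  ultimately show ?thesis
    by blast
qed

lemma exists_shrinkage_lowering_error:
  fixes F :: "'k \<Rightarrow> real \<Rightarrow> real"
  assumes "finite K0" and "K0 \<inter> K1 = {}" and "k0 \<in> K0"
    and mono: "\<And>k. mono (F k)" and lim: "\<And>k. (F k \<longlongrightarrow> 1) at_top"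
    and cont: "\<And>k t. 0 < t \<Longrightarrow> isCont (F k) t"
    and "0 < z1" and "z1 \<le> z2" and "F k0 z2 < 1"
  shows "\<exists>c. (\<forall>k. 0 < c k \<and> c k < 1) \<and> (\<forall>z\<in>{z1..z2}.
           (\<Sum>k\<in>K0. 1 - F k (z / c k)) + (\<Sum>k\<in>K1. F k (z / c k))
             < (\<Sum>k\<in>K0. 1 - F k z) + (\<Sum>k\<in>K1. F k z))"
proof -
  obtain c0 where c0: "0 < c0" "c0 < 1" and lower:
      "\<And>z. z \<in> {z1..z2} \<Longrightarrow> (\<Sum>k\<in>K0. 1 - F k (z / c0)) + (1 - F k0 z2) / 2 < (\<Sum>k\<in>K0. 1 - F k z)"
    using exists_dilation_lowering_tails[of K0 k0 F, OF assms(1,3) mono lim assms(7-9)] by blast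
  have "continuous_on {z1..2 * z2} (\<lambda>t. \<Sum>k\<in>K1. F k t)"
    using \<open>0 < z1\<close> by (intro continuous_on_sum continuous_at_imp_continuous_on ballI cont) auto
  then have "\<exists>c1. 0 < c1 \<and> c1 < 1 \<and> (\<forall>z\<in>{z1..z2}.
               \<bar>(\<Sum>k\<in>K1. F k (z / c1)) - (\<Sum>k\<in>K1. F k z)\<bar> < (1 - F k0 z2) / 2)"
    by (rule exists_dilation_uniformly_close) (use assms(7-9) in auto)
  then obtain c1 where c1: "0 < c1" "c1 < 1" and close:
      "\<And>z. z \<in> {z1..z2} \<Longrightarrow> \<bar>(\<Sum>k\<in>K1. F k (z / c1)) - (\<Sum>k\<in>K1. F k z)\<bar> < (1 - F k0 z2) / 2"
    by blast
  define c where "c k = (if k \<in> K0 then c0 else c1)" for k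
  have sums: "(\<Sum>k\<in>K0. 1 - F k (z / c k)) = (\<Sum>k\<in>K0. 1 - F k (z / c0))"
    "(\<Sum>k\<in>K1. F k (z / c k)) = (\<Sum>k\<in>K1. F k (z / c1))" for z
    using \<open>K0 \<inter> K1 = {}\<close> by (auto simp: c_def intro!: sum.cong)
  show ?thesis
  proof (intro exI[of _ c] conjI allI ballI)
    show "0 < c k" "c k < 1" for k
      using c0 c1 by (simp_all add: c_def)
    show "(\<Sum>k\<in>K0. 1 - F k (z / c k)) + (\<Sum>k\<in>K1. F k (z / c k))
            < (\<Sum>k\<in>K0. 1 - F k z) + (\<Sum>k\<in>K1. F k z)" if "z \<in> {z1..z2}" for z
      using lower[OF that] close[OF that] unfolding sums by argo
  qed
qed

lemma exists_hypervariance_lowering_risk: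
  fixes X :: "real^'k::finite^'n::finite"
  assumes XtX: "transpose X ** X = mat (real CARD('n))" and card: "CARD('k) < CARD('n)"
    and s0: "0 < s0" and "b0 $ k0 = 0" and "0 < z1" and "z1 \<le> z2"
  shows "\<exists>g. (\<forall>k. 0 < g $ k) \<and>
           (\<forall>a. z_crit a \<in> {z1..z2} \<longrightarrow> risk_Z X b0 s0 g a < risk_O X b0 s0 a)"
proof -
  define F where "F = abs_z_stat_cdf X b0 s0"
  have mono: "mono (F k)" and lim: "(F k \<longlongrightarrow> 1) at_top" for k
    unfolding F_def using s0 by (fact abs_z_stat_cdf_mono_tendsto)+
  have cont: "isCont (F k) t" if "0 < t" for k t
    unfolding F_def using XtX s0 that by (rule abs_z_stat_cdf_no_atom(3))
  have "F k0 z2 < 1"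
    unfolding F_def using \<open>0 < z1\<close> \<open>z1 \<le> z2\<close> by (intro abs_z_stat_cdf_less_one[OF XtX card s0]) simp
  moreover have "finite {k. b0 $ k = 0}" and "{k. b0 $ k = 0} \<inter> {k. b0 $ k \<noteq> 0} = {}"
    and "k0 \<in> {k. b0 $ k = 0}"
    using \<open>b0 $ k0 = 0\<close> by auto
  ultimately obtain c where c: "\<forall>k. 0 < c k \<and> c k < 1" and less: "\<forall>z\<in>{z1..z2}.
      (\<Sum>k\<in>{k. b0 $ k = 0}. 1 - F k (z / c k)) + (\<Sum>k\<in>{k. b0 $ k \<noteq> 0}. F k (z / c k))
        < (\<Sum>k\<in>{k. b0 $ k = 0}. 1 - F k z) + (\<Sum>k\<in>{k. b0 $ k \<noteq> 0}. F k z)"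
    using exists_shrinkage_lowering_error[of _ _ k0 F, OF _ _ _ mono lim cont \<open>0 < z1\<close> \<open>z1 \<le> z2\<close>]
    by blast
  define g where "g = (\<chi> k. c k / (1 - c k))"
  have g: "0 < g $ k" and shrinkage: "g $ k / (1 + g $ k) = c k" for k
    using c[rule_format, of k] by (auto simp: g_def field_simps)
  have "risk_Z X b0 s0 g a < risk_O X b0 s0 a" if "z_crit a \<in> {z1..z2}" for a
    using less that \<open>0 < z1\<close>
    by (simp add: risk_Z_eq_abs_z_stat_cdf[OF XtX s0 _ g] risk_O_eq_abs_z_stat_cdf[OF XtX s0] shrinkage F_def)
  then show ?thesis
    using g by blast
qed

theorem theorem5:
  fixes X :: "real^'k::finite^'n::finite"
    and b0 :: "real^'k"
    and s0 :: real and \<delta> :: real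
  assumes "CARD('n) > CARD('k)"
    and "transpose X ** X = mat (real CARD('n))"
    and "s0 > 0"
    and "\<exists>k. b0 $ k \<noteq> 0" and "\<exists>k. b0 $ k = 0"
    and "0 < \<delta>" and "\<delta> < 1/2"
  shows "\<exists>g :: real^'k. (\<forall>k. g $ k > 0) \<and>
           (\<forall>a \<in> {\<delta>..1-\<delta>}. risk_Z X b0 s0 g a < risk_O X b0 s0 a)"
proof -
  obtain k0 where "b0 $ k0 = 0"
    using assms(5) by blast
  have "z_crit a \<in> {z_crit (1 - \<delta>)..z_crit \<delta>}" if "a \<in> {\<delta>..1 - \<delta>}" for a
    using that assms(6,7) by (auto intro!: z_crit_antimono)
  moreover have "0 < z_crit (1 - \<delta>)"
    using assms(6,7) by (simp add: z_crit_pos)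
  moreover have "z_crit (1 - \<delta>) \<le> z_crit \<delta>"
    using assms(6,7) by (intro z_crit_antimono) auto
  ultimately show ?thesis
    using exists_hypervariance_lowering_risk[OF assms(2,1,3) \<open>b0 $ k0 = 0\<close>] by blast
qed

end
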